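(* For all $A,B\in\mathrm{SL}(2,\mathbb Z)$, $c(AB)\le c(A)+c(B)$ and $c(AB)\equiv c(A)+c(B)\pmod 2$.
   Context: Admissible hexagons are the sets $\{\pm a,\pm b,\pm(a+b)\}\subset\mathbb Z^2$ with $(a,b)$ a basis of $\mathbb Z^2$ (they correspond to isotopy classes of $\theta$-curves in $T^2$). $\Gamma$ is the graph whose vertices are admissible hexagons, two being adjacent iff they share two opposite pairs of vertices $\pm\sigma,\pm\mu$ (this corresponds to a flip of a $\theta$-curve); $\Gamma$ is a trivalent tree, $d$ its graph distance, and $\mathrm{SL}(2,\mathbb Z)$ acts on it by isometries. With $W_0=\{\pm(1,0),\pm(0,1),\pm(1,-1)\}$, $c(A)=d(W_0,AW_0)$. *)

theory Defs
  imports "HOL-Analysis.Analysis"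
begin

definition vec2 :: "int \<Rightarrow> int \<Rightarrow> int ^ 2" where
  "vec2 x y = (\<chi> i. if i = 1 then x else y)"

definition is_basis_Z2 :: "int ^ 2 \<Rightarrow> int ^ 2 \<Rightarrow> bool" where
  "is_basis_Z2 a b \<longleftrightarrow> (\<forall>v :: int ^ 2. \<exists>!p :: int \<times> int. v = fst p *s a + snd p *s b)"

definition hexagon :: "int ^ 2 \<Rightarrow> int ^ 2 \<Rightarrow> (int ^ 2) set" where
  "hexagon a b = {a, -a, b, -b, a + b, -(a + b)}"

definition admissible :: "(int ^ 2) set \<Rightarrow> bool" where
  "admissible H \<longleftrightarrow> (\<exists>a b. is_basis_Z2 a b \<and> H = hexagon a b)"

definition adj :: "(int ^ 2) set \<Rightarrow> (int ^ 2) set \<Rightarrow> bool" where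
  "adj H K \<longleftrightarrow> admissible H \<and> admissible K \<and> H \<noteq> K \<and>
     (\<exists>\<sigma> \<mu>. \<mu> \<noteq> \<sigma> \<and> \<mu> \<noteq> -\<sigma> \<and> {\<sigma>, -\<sigma>, \<mu>, -\<mu>} \<subseteq> H \<inter> K)"

definition gdist :: "(int ^ 2) set \<Rightarrow> (int ^ 2) set \<Rightarrow> nat" where
  "gdist H K = (LEAST n. (adj ^^ n) H K)"

definition W0 :: "(int ^ 2) set" where
  "W0 = {vec2 1 0, -vec2 1 0, vec2 0 1, -vec2 0 1, vec2 1 (-1), -vec2 1 (-1)}"

definition act :: "int ^ 2 ^ 2 \<Rightarrow> (int ^ 2) set \<Rightarrow> (int ^ 2) set" where
  "act A H = (\<lambda>v. A *v v) ` H"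

definition cfun :: "int ^ 2 ^ 2 \<Rightarrow> nat" where
  "cfun A = gdist W0 (act A W0)"

end

theory Submission
  imports Defs
begin

(* Everything follows from two properties of the flip graph \<Gamma>.
  It is connected: writing an admissible hexagon as the superbase x, y, -(x + y), flipping
  across a pair with positive inner product lowers |x|^2 + |y|^2 + |x + y|^2, and a superbase
  with no such pair spans W0 or one of its neighbours.  Since SL(2,Z) acts by graph
  automorphisms, a shortest path from W0 to A W0 followed by the A-image of a shortest path
  from W0 to B W0 is a walk of length c(A) + c(B) from W0 to AB W0.
  It is bipartite: an explicit two-colouring of the hexagons swaps colour along every edge,
  so all walks between two given vertices have the same length modulo 2. *)

lemma vec_eq_iff_2: "(u :: 'a ^ 2) = v \<longleftrightarrow> u$1 = v$1 \<and> u$2 = v$2"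
  by (simp add: vec_eq_iff forall_2)

lemma matrix_vector_mult_nth_2:
  fixes A :: "'a::semiring_1 ^ 2 ^ 2"
  shows "(A *v v)$1 = A$1$1 * v$1 + A$1$2 * v$2" "(A *v v)$2 = A$2$1 * v$1 + A$2$2 * v$2"
  by (simp_all add: matrix_vector_mult_def sum_2)

lemma matrix_vector_mult_uminus_right:
  fixes A :: "'a::ring_1 ^ 'n ^ 'm"
  shows "A *v (- x) = - (A *v x)"
  by (metis diff_0 matrix_vector_mult_diff_distrib matrix_vector_mult_0_right)

lemma vec2_nth [simp]: "vec2 a b $ 1 = a" "vec2 a b $ 2 = b"
  by (simp_all add: vec2_def)

lemma vec2_eta: "vec2 (x$1) (x$2) = x"
  by (simp add: vec_eq_iff_2)

lemma vec2_add: "vec2 a b + vec2 c d = vec2 (a + c) (b + d)"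
  by (simp add: vec_eq_iff_2)

lemma vec2_uminus: "- vec2 a b = vec2 (- a) (- b)"
  by (simp add: vec_eq_iff_2)

lemma vec2_eq_iff: "vec2 a b = vec2 c d \<longleftrightarrow> a = c \<and> b = d"
  by (simp add: vec_eq_iff_2)

definition det2 :: "int ^ 2 \<Rightarrow> int ^ 2 \<Rightarrow> int" where
  "det2 a b = a$1 * b$2 - a$2 * b$1"

definition unimodular :: "int ^ 2 \<Rightarrow> int ^ 2 \<Rightarrow> bool" where
  "unimodular a b \<longleftrightarrow> \<bar>det2 a b\<bar> = 1"

lemma det2_simps [simp]:
  "det2 (a + b) c = det2 a c + det2 b c" "det2 a (b + c) = det2 a b + det2 a c"
  "det2 (- a) b = - det2 a b" "det2 a (- b) = - det2 a b"
  "det2 (a - b) c = det2 a c - det2 b c" "det2 a (b - c) = det2 a b - det2 a c"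
  "det2 (k *s a) b = k * det2 a b" "det2 a (k *s b) = k * det2 a b"
  "det2 a a = 0"
  by (simp_all add: det2_def algebra_simps)

lemma det2_commute: "det2 b a = - det2 a b"
  by (simp add: det2_def)

lemma det2_matrix_vector_mult: "det2 (A *v a) (A *v b) = det A * det2 a b"
  by (simp add: det2_def matrix_vector_mult_nth_2 det_2 algebra_simps)

lemma det2_expansion: "det2 x y *s w = det2 w y *s x + det2 x w *s y"
  by (simp add: vec_eq_iff_2 det2_def algebra_simps)

lemma det2_lincomb: "det2 (p *s a + q *s b) (r *s a + t *s b) = (p * t - q * r) * det2 a b"
  by (simp add: det2_def algebra_simps)

lemma unimodular_iff: "unimodular a b \<longleftrightarrow> det2 a b = 1 \<or> det2 a b = -1"
  by (auto simp: unimodular_def)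

lemma unimodular_det2_square: "unimodular a b \<Longrightarrow> det2 a b * det2 a b = 1"
  by (auto simp: unimodular_iff)

lemma is_basis_Z2_iff_unimodular: "is_basis_Z2 a b \<longleftrightarrow> unimodular a b"
proof
  assume "is_basis_Z2 a b"
  then have "\<exists>p q. w = p *s a + q *s b" for w
    unfolding is_basis_Z2_def by (metis prod.collapse)
  then obtain p q r t where
    e1: "vec2 1 0 = p *s a + q *s b" and e2: "vec2 0 1 = r *s a + t *s b"
    by meson
  have "(p * t - q * r) * det2 a b = det2 (vec2 1 0) (vec2 0 1)"
    unfolding e1 e2 by (rule det2_lincomb[symmetric])
  also have "\<dots> = 1"
    by (simp add: det2_def vec2_def)
  finally show "unimodular a b"
    unfolding unimodular_iff using zmult_eq_1_iff by blast
next
  assume "unimodular a b"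
  then have det_sq: "det2 a b * det2 a b = 1" by (rule unimodular_det2_square)
  show "is_basis_Z2 a b" unfolding is_basis_Z2_def
  proof
    fix v :: "int ^ 2"
    have "v = det2 a b *s (det2 a b *s v)"
      using det_sq by (simp add: vector_smult_assoc)
    also have "\<dots> = det2 a b *s (det2 v b *s a + det2 a v *s b)"
      using det2_expansion[of a b v] by simp
    finally have v: "v = (det2 a b * det2 v b) *s a + (det2 a b * det2 a v) *s b"
      by (simp add: vector_add_ldistrib vector_smult_assoc)
    have unique: "p = det2 a b * det2 v b \<and> q = det2 a b * det2 a v"
      if "v = p *s a + q *s b" for p q
    proof -
      have "det2 v b = p * det2 a b" "det2 a v = q * det2 a b"
        unfolding that by simp_all
      then show ?thesis using det_sq by (simp add: algebra_simps)
    qed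
    show "\<exists>!p. v = fst p *s a + snd p *s b"
    proof (rule ex1I[of _ "(det2 a b * det2 v b, det2 a b * det2 a v)"])
      fix c :: "int \<times> int"
      assume "v = fst c *s a + snd c *s b"
      then show "c = (det2 a b * det2 v b, det2 a b * det2 a v)"
        using unique by (simp add: prod_eq_iff)
    qed (use v in simp)
  qed
qed

lemma vec_eq_iff_det2:
  assumes "unimodular x y"
  shows "u = v \<longleftrightarrow> det2 u y = det2 v y \<and> det2 x u = det2 x v"
proof
  assume "det2 u y = det2 v y \<and> det2 x u = det2 x v"
  then have "det2 x y *s u = det2 x y *s v"
    using det2_expansion[of x y u] det2_expansion[of x y v] by simp
  then have "det2 x y *s (det2 x y *s u) = det2 x y *s (det2 x y *s v)"
    by simp
  then show "u = v"
    using unimodular_det2_square[OF assms] by (simp add: vector_smult_assoc)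
qed simp

lemma unimodular_uminus [simp]:
  "unimodular (- a) b \<longleftrightarrow> unimodular a b" "unimodular a (- b) \<longleftrightarrow> unimodular a b"
  by (simp_all add: unimodular_def)

lemma admissible_iff: "admissible H \<longleftrightarrow> (\<exists>a b. unimodular a b \<and> H = hexagon a b)"
  by (simp add: admissible_def is_basis_Z2_iff_unimodular)

lemma hexagon_through_pair:
  assumes "unimodular a b" "\<sigma> \<in> hexagon a b" "\<mu> \<in> hexagon a b" "\<mu> \<noteq> \<sigma>" "\<mu> \<noteq> - \<sigma>"
  shows "unimodular \<sigma> \<mu> \<and> (hexagon a b = hexagon \<sigma> \<mu> \<or> hexagon a b = hexagon \<sigma> (- \<mu>))"
  using assms unfolding hexagon_def insert_iff empty_iff simp_thms
  apply (elim disjE)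
  apply (simp_all only:)
  apply (simp_all add: algebra_simps insert_commute)
  apply (simp_all add: unimodular_iff det2_def algebra_simps)
  apply linarith+
  done

lemma hexagon_flip_neq:
  assumes "unimodular x y"
  shows "hexagon x y \<noteq> hexagon x (- y)"
proof
  have "x + y \<in> hexagon x y" by (simp add: hexagon_def)
  moreover assume "hexagon x y = hexagon x (- y)"
  ultimately have "x + y \<in> hexagon x (- y)" by simp
  with assms show False
    unfolding hexagon_def by (auto simp: vec_eq_iff_det2[OF assms] det2_commute[of y x] unimodular_iff)
qed

lemma adj_iff_flip:
  "adj H K \<longleftrightarrow> (\<exists>x y. unimodular x y \<and> H = hexagon x y \<and> K = hexagon x (- y))"
proof
  assume "adj H K"
  then obtain a b c d \<sigma> \<mu> where
    H: "unimodular a b" "H = hexagon a b" and K: "unimodular c d" "K = hexagon c d" and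
    "H \<noteq> K" "\<mu> \<noteq> \<sigma>" "\<mu> \<noteq> - \<sigma>" "{\<sigma>, - \<sigma>, \<mu>, - \<mu>} \<subseteq> H \<inter> K"
    unfolding adj_def admissible_iff by blast
  with hexagon_through_pair[of a b \<sigma> \<mu>] hexagon_through_pair[of c d \<sigma> \<mu>]
  have "unimodular \<sigma> \<mu>" "H \<noteq> K"
    "H = hexagon \<sigma> \<mu> \<or> H = hexagon \<sigma> (- \<mu>)" "K = hexagon \<sigma> \<mu> \<or> K = hexagon \<sigma> (- \<mu>)"
    by auto
  then show "\<exists>x y. unimodular x y \<and> H = hexagon x y \<and> K = hexagon x (- y)"
    by (metis minus_minus unimodular_uminus(2))
next
  assume "\<exists>x y. unimodular x y \<and> H = hexagon x y \<and> K = hexagon x (- y)"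
  then obtain x y where xy: "unimodular x y" and HK: "H = hexagon x y" "K = hexagon x (- y)"
    by blast
  have "y \<noteq> x" "y \<noteq> - x"
    using xy by (auto simp: vec_eq_iff_det2[OF xy] det2_commute[of y x] unimodular_iff)
  moreover have "{x, - x, y, - y} \<subseteq> H \<inter> K"
    unfolding HK hexagon_def by auto
  ultimately show "adj H K"
    unfolding adj_def admissible_iff using xy HK hexagon_flip_neq[OF xy]
    by (metis unimodular_uminus(2))
qed

lemma adj_flipI: "unimodular x y \<Longrightarrow> adj (hexagon x (- y)) (hexagon x y)"
  unfolding adj_iff_flip by (metis minus_minus unimodular_uminus(2))

lemma act_hexagon: "act A (hexagon a b) = hexagon (A *v a) (A *v b)"
  unfolding act_def hexagon_def
  by (simp only: image_insert image_empty matrix_vector_right_distrib matrix_vector_mult_uminus_right)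

lemma unimodular_matrix_vector_mult:
  "\<bar>det A\<bar> = 1 \<Longrightarrow> unimodular a b \<Longrightarrow> unimodular (A *v a) (A *v b)"
  by (simp add: unimodular_def det2_matrix_vector_mult abs_mult)

lemma adj_act:
  assumes "\<bar>det A\<bar> = 1" "adj H K"
  shows "adj (act A H) (act A K)"
proof -
  obtain x y where xy: "unimodular x y" and HK: "H = hexagon x y" "K = hexagon x (- y)"
    using assms(2) unfolding adj_iff_flip by blast
  have "unimodular (A *v x) (A *v y)"
    using unimodular_matrix_vector_mult[OF assms(1) xy] .
  moreover have "act A H = hexagon (A *v x) (A *v y)" "act A K = hexagon (A *v x) (- (A *v y))"
    unfolding HK act_hexagon matrix_vector_mult_uminus_right by (rule refl)+
  ultimately show ?thesis
    unfolding adj_iff_flip by blast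
qed

lemma relpowp_adj_act:
  assumes "\<bar>det A\<bar> = 1"
  shows "(adj ^^ n) H K \<Longrightarrow> (adj ^^ n) (act A H) (act A K)"
proof (induction n arbitrary: K)
  case (Suc n)
  from Suc.prems obtain J where "(adj ^^ n) H J" "adj J K"
    by (rule relpowp_Suc_E)
  with Suc.IH adj_act[OF assms] show ?case
    by (meson relpowp_Suc_I)
qed simp

(* With B x y = x$1 * y$1 + x$2 * y$2 + x$2 * y$1, the sum B x y + B y x has the parity of
  det2 x y, and B y y is odd for primitive y.  Hence the colour does not depend on which of the
  twelve pairs (u, v) presents a hexagon, while replacing y by - y changes only the sign of
  det2 x y. *)
definition pair_colour :: "int ^ 2 \<Rightarrow> int ^ 2 \<Rightarrow> bool" where
  "pair_colour x y \<longleftrightarrow> (even (x$1 * y$1 + x$2 * y$2 + x$2 * y$1) \<longleftrightarrow> det2 x y = 1)"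

lemma pair_colour_flip: "unimodular x y \<Longrightarrow> pair_colour x (- y) \<longleftrightarrow> \<not> pair_colour x y"
  by (auto simp: pair_colour_def unimodular_iff)

lemma unimodular_pairs_in_hexagon:
  assumes "unimodular x y" "u \<in> hexagon x y" "v \<in> hexagon x y" "u + v \<in> hexagon x y"
    "unimodular u v"
  shows "(u, v) \<in> {(x, y), (y, - (x + y)), (- (x + y), x), (y, x), (x, - (x + y)), (- (x + y), y),
    (- x, - y), (- y, x + y), (x + y, - x), (- y, - x), (- x, x + y), (x + y, - y)}"
proof -
  have yx: "det2 y x = - det2 x y"
    by (rule det2_commute)
  have "det2 x y = 1 \<or> det2 x y = -1"
    using assms(1) by (simp add: unimodular_iff)
  then show ?thesis
    using assms(2,3) unfolding hexagon_def insert_iff empty_iff simp_thms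
    apply (elim disjE)
    using assms(4,5) unfolding hexagon_def insert_iff empty_iff prod.inject unimodular_iff
    apply (simp_all only:)
    apply (simp_all only: vec_eq_iff_det2[OF assms(1)] det2_simps yx)
    by auto
qed

lemma pair_colour_hexagon_invariant:
  assumes "unimodular x y" "unimodular u v" "hexagon u v = hexagon x y"
  shows "pair_colour u v \<longleftrightarrow> pair_colour x y"
proof -
  have mem: "u \<in> hexagon x y" "v \<in> hexagon x y" "u + v \<in> hexagon x y"
    unfolding assms(3)[symmetric] by (simp_all add: hexagon_def)
  have uv: "(u, v) \<in> {(x, y), (y, - (x + y)), (- (x + y), x), (y, x), (x, - (x + y)),
    (- (x + y), y), (- x, - y), (- y, x + y), (x + y, - x), (- y, - x), (- x, x + y), (x + y, - y)}"
    by (rule unimodular_pairs_in_hexagon[OF assms(1) mem assms(2)])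
  have det: "det2 x y = 1 \<or> det2 x y = -1"
    using assms(1) by (simp add: unimodular_iff)
  then have "odd (det2 x y)"
    by auto
  then have odd_det: "odd (x$1 * y$2 - x$2 * y$1)"
    unfolding det2_def .
  have yx: "det2 y x = - det2 x y"
    by (rule det2_commute)
  from uv show ?thesis
    unfolding insert_iff empty_iff prod.inject
    apply (elim disjE conjE)
    apply (simp_all only:)
    apply (simp_all add: pair_colour_def yx)
    using det odd_det by auto
qed

definition hexagon_colour :: "(int ^ 2) set \<Rightarrow> bool" where
  "hexagon_colour H \<longleftrightarrow> (\<exists>x y. unimodular x y \<and> H = hexagon x y \<and> pair_colour x y)"

lemma hexagon_colour_hexagon:
  "unimodular x y \<Longrightarrow> hexagon_colour (hexagon x y) \<longleftrightarrow> pair_colour x y"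
  unfolding hexagon_colour_def by (metis pair_colour_hexagon_invariant)

lemma adj_hexagon_colour: "adj H K \<Longrightarrow> hexagon_colour K \<longleftrightarrow> \<not> hexagon_colour H"
  by (auto simp: adj_iff_flip hexagon_colour_hexagon pair_colour_flip)

lemma relpowp_adj_parity:
  "(adj ^^ n) H K \<Longrightarrow> even n \<longleftrightarrow> (hexagon_colour H \<longleftrightarrow> hexagon_colour K)"
proof (induction n arbitrary: K)
  case (Suc n)
  from Suc.prems obtain J where "(adj ^^ n) H J" "adj J K"
    by (rule relpowp_Suc_E)
  with Suc.IH adj_hexagon_colour show ?case
    by auto
qed simp

definition dot2 :: "int ^ 2 \<Rightarrow> int ^ 2 \<Rightarrow> int" where
  "dot2 u v = u$1 * v$1 + u$2 * v$2"

lemma lagrange_identity_2: "dot2 x x * dot2 y y = dot2 x y * dot2 x y + det2 x y * det2 x y"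
  by (simp add: dot2_def det2_def algebra_simps)

lemma product_eq_square_plus_one_le_2:
  fixes X Y t :: int
  assumes "0 \<le> t" "t \<le> X" "t \<le> Y" "X * Y = t * t + 1"
  shows "X \<le> 2"
proof -
  consider "t = 0" | "X = t" | "Y = t" | "1 \<le> t" "t + 1 \<le> X" "t + 1 \<le> Y"
    using assms(1-3) by linarith
  then show ?thesis
  proof cases
    case 1
    then show ?thesis using assms(2,4) by (simp add: zmult_eq_1_iff)
  next
    case 2
    then have "t * (Y - t) = 1" using assms(4) by (simp add: algebra_simps)
    then show ?thesis using 2 assms(1) by (simp add: zmult_eq_1_iff)
  next
    case 3
    then have "(X - t) * t = 1" using assms(4) by (simp add: algebra_simps)
    then show ?thesis using assms(1) by (auto simp: zmult_eq_1_iff)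
  next
    case 4
    then have "(t + 1) * (t + 1) \<le> X * Y"
      by (intro mult_mono) auto
    with 4 assms(4) show ?thesis by (simp add: algebra_simps)
  qed
qed

lemma abs_le_1_if_sum_squares_le_2:
  fixes a b :: int
  assumes "a * a + b * b \<le> 2"
  shows "a \<in> {-1, 0, 1}"
proof -
  have "\<bar>a\<bar> * \<bar>a\<bar> \<le> 2"
    using assms zero_le_square[of b] by (simp only: abs_mult_self_eq)
  moreover have "2 * 2 \<le> \<bar>a\<bar> * \<bar>a\<bar>" if "2 \<le> \<bar>a\<bar>"
    using that by (intro mult_mono) auto
  ultimately show ?thesis by fastforce
qed

lemma obtuse_superbase_hexagon:
  assumes "unimodular x y" "dot2 x y \<le> 0" "dot2 y (- (x + y)) \<le> 0" "dot2 (- (x + y)) x \<le> 0"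
  shows "hexagon x y = W0 \<or> hexagon x y = hexagon (vec2 1 0) (vec2 0 1)"
proof -
  obtain a b c d where x: "x = vec2 a b" and y: "y = vec2 c d"
    by (metis vec2_eta)
  (* With t = - dot2 x y, Lagrange's identity reads |x|^2 |y|^2 = t^2 + 1, and obtuseness
    gives 0 \<le> t \<le> |x|^2, |y|^2; this forces |x|^2, |y|^2 \<le> 2. *)
  have "dot2 x x * dot2 y y = (- dot2 x y) * (- dot2 x y) + 1"
    using lagrange_identity_2[of x y] unimodular_det2_square[OF assms(1)] by simp
  moreover have "- dot2 x y \<le> dot2 x x" "- dot2 x y \<le> dot2 y y"
    using assms(3,4) by (simp_all add: dot2_def algebra_simps)
  ultimately have "dot2 x x \<le> 2" "dot2 y y \<le> 2"
    using product_eq_square_plus_one_le_2[of "- dot2 x y" "dot2 x x" "dot2 y y"]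
      product_eq_square_plus_one_le_2[of "- dot2 x y" "dot2 y y" "dot2 x x"] assms(2)
    by (simp_all add: mult.commute)
  then have "a \<in> {-1, 0, 1}" "b \<in> {-1, 0, 1}" "c \<in> {-1, 0, 1}" "d \<in> {-1, 0, 1}"
    using abs_le_1_if_sum_squares_le_2[of a b] abs_le_1_if_sum_squares_le_2[of b a]
      abs_le_1_if_sum_squares_le_2[of c d] abs_le_1_if_sum_squares_le_2[of d c]
    by (simp_all add: x y dot2_def add.commute)
  then show ?thesis
    using assms unfolding x y insert_iff empty_iff
    apply (elim disjE)
    apply (simp_all only:)
    apply (simp_all add: unimodular_iff det2_def dot2_def hexagon_def W0_def vec2_add vec2_uminus
        vec2_eq_iff insert_commute)
    done
qed

definition superbase_energy :: "int ^ 2 \<Rightarrow> int ^ 2 \<Rightarrow> int" where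
  "superbase_energy x y = dot2 x x + dot2 y y + dot2 (x + y) (x + y)"

lemma superbase_energy_nonneg: "0 \<le> superbase_energy x y"
  by (simp add: superbase_energy_def dot2_def)

lemma superbase_energy_flip: "superbase_energy x (- y) = superbase_energy x y - 4 * dot2 x y"
  by (simp add: superbase_energy_def dot2_def algebra_simps)

lemma rotate_superbase:
  "hexagon y (- (x + y)) = hexagon x y" "superbase_energy y (- (x + y)) = superbase_energy x y"
  "unimodular y (- (x + y)) \<longleftrightarrow> unimodular x y"
  "hexagon (- (x + y)) x = hexagon x y" "superbase_energy (- (x + y)) x = superbase_energy x y"
  "unimodular (- (x + y)) x \<longleftrightarrow> unimodular x y"
  by (auto simp: hexagon_def superbase_energy_def dot2_def unimodular_def det2_def algebra_simps)

lemma W0_eq_hexagon: "W0 = hexagon (vec2 1 0) (- vec2 0 1)"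
  by (auto simp: W0_def hexagon_def vec2_add vec2_uminus)

lemma unimodular_standard_basis: "unimodular (vec2 1 0) (vec2 0 1)"
  by (simp add: unimodular_def det2_def)

lemma rtranclp_adj_W0_hexagon: "unimodular x y \<Longrightarrow> adj\<^sup>*\<^sup>* W0 (hexagon x y)"
proof (induction "nat (superbase_energy x y)" arbitrary: x y rule: less_induct)
  case less
  have flip: "adj\<^sup>*\<^sup>* W0 (hexagon p q)"
    if "unimodular p q" "0 < dot2 p q" "superbase_energy p q = superbase_energy x y" for p q
  proof -
    have "nat (superbase_energy p (- q)) < nat (superbase_energy x y)"
      using that(2,3) superbase_energy_flip[of p q] superbase_energy_nonneg[of p "- q"] by linarith
    then have "adj\<^sup>*\<^sup>* W0 (hexagon p (- q))"
      using less.hyps that(1) by simp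
    then show ?thesis
      using adj_flipI[OF that(1)] by (rule rtranclp.rtrancl_into_rtrancl)
  qed
  consider "0 < dot2 x y" | "0 < dot2 y (- (x + y))" | "0 < dot2 (- (x + y)) x"
    | "dot2 x y \<le> 0" "dot2 y (- (x + y)) \<le> 0" "dot2 (- (x + y)) x \<le> 0"
    by linarith
  then show ?case
  proof cases
    case 1
    with flip less.prems show ?thesis by blast
  next
    case 2
    have "adj\<^sup>*\<^sup>* W0 (hexagon y (- (x + y)))"
      using 2 less.prems by (intro flip) (simp_all only: rotate_superbase)
    then show ?thesis by (simp only: rotate_superbase)
  next
    case 3
    have "adj\<^sup>*\<^sup>* W0 (hexagon (- (x + y)) x)"
      using 3 less.prems by (intro flip) (simp_all only: rotate_superbase)
    then show ?thesis by (simp only: rotate_superbase)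
  next
    case 4
    have "adj W0 (hexagon (vec2 1 0) (vec2 0 1))"
      using adj_flipI[OF unimodular_standard_basis] by (simp only: W0_eq_hexagon)
    with obtuse_superbase_hexagon[OF less.prems 4] show ?thesis by auto
  qed
qed

lemma gdist_walk: "(adj ^^ n) H K \<Longrightarrow> (adj ^^ gdist H K) H K"
  unfolding gdist_def by (rule LeastI)

lemma gdist_le: "(adj ^^ n) H K \<Longrightarrow> gdist H K \<le> n"
  unfolding gdist_def by (rule Least_le)

lemma act_matrix_mult: "act (A ** B) H = act A (act B H)"
  by (simp add: act_def image_image matrix_vector_mul_assoc)

lemma cfun_walk:
  assumes "\<bar>det A\<bar> = 1"
  shows "(adj ^^ cfun A) W0 (act A W0)"
proof -
  have "act A W0 = hexagon (A *v vec2 1 0) (- (A *v vec2 0 1))"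
    by (simp add: W0_eq_hexagon act_hexagon matrix_vector_mult_uminus_right)
  moreover have "unimodular (A *v vec2 1 0) (- (A *v vec2 0 1))"
    using unimodular_matrix_vector_mult[OF assms unimodular_standard_basis] by simp
  ultimately obtain n where "(adj ^^ n) W0 (act A W0)"
    using rtranclp_adj_W0_hexagon rtranclp_imp_relpowp by metis
  then show ?thesis
    unfolding cfun_def by (rule gdist_walk)
qed

theorem lemma1:
  fixes A B :: "int ^ 2 ^ 2"
  assumes "det A = 1" and "det B = 1"
  shows "cfun (A ** B) \<le> cfun A + cfun B \<and> cfun (A ** B) mod 2 = (cfun A + cfun B) mod 2"
proof -
  have walk_A: "(adj ^^ cfun A) W0 (act A W0)"
    using assms(1) by (simp add: cfun_walk)
  have walk_B: "(adj ^^ cfun B) (act A W0) (act (A ** B) W0)"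
    using relpowp_adj_act[of A "cfun B"] cfun_walk[of B] assms by (simp add: act_matrix_mult)
  have walk_AB: "(adj ^^ cfun (A ** B)) W0 (act (A ** B) W0)"
    using assms by (simp add: cfun_walk det_mul)
  from walk_A walk_B have "(adj ^^ (cfun A + cfun B)) W0 (act (A ** B) W0)"
    by (auto simp: relpowp_add)
  then have "cfun (A ** B) \<le> cfun A + cfun B"
    unfolding cfun_def by (rule gdist_le)
  moreover have "even (cfun (A ** B)) \<longleftrightarrow> even (cfun A + cfun B)"
    using relpowp_adj_parity[OF walk_A] relpowp_adj_parity[OF walk_B]
      relpowp_adj_parity[OF walk_AB] by auto
  ultimately show ?thesis
    by (metis even_iff_mod_2_eq_zero odd_iff_mod_2_eq_one)
qed

end
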